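(* Let $N$ be a finite or infinite set and let $\mathcal A'\subseteq\mathcal P(N)$ with $\emptyset,N\in\mathcal A'$. Let $v'\colon\mathcal A'\to\mathbb R$ be a coalition function with $v'(\emptyset)=0$. If $v'$ is bounded below (there is $L\in\mathbb R$ with $v'(S)\ge L$ for all $S\in\mathcal A'$), then $\mathrm{ba\text{-}core}(v')\neq\emptyset$ if and only if $v'$ is bounded-balanced.
   Context: $\mathrm{field}(\mathcal A')$ denotes the smallest field of sets over $N$ containing $\mathcal A'$ (a field of sets over $N$ is a collection containing $\emptyset$, closed under complements in $N$ and finite unions). For a field $\mathcal A$, $\mathrm{ba}(\mathcal A)$ is the set of bounded additive set functions $\mu\colon\mathcal A\to\mathbb R$ ($\sup_{S\in\mathcal A}|\mu(S)|<\infty$ and $\mu(S\cup T)=\mu(S)+\mu(T)$ for disjoint $S,T\in\mathcal A$). The core is $\mathrm{ba\text{-}core}(v')=\{\mu\in\mathrm{ba}(\mathrm{field}(\mathcal A')):\mu(N)=v'(N),\ \mu(S)\ge v'(S)\text{ for all }S\in\mathcal A'\setminus\{N\}\}$. For a field $\mathcal A$ and $v\colon\mathcal A\to\mathbb R$ with $v(\emptyset)=0$: a finite collection $\{S_1,\dots,S_r\}\subseteq\mathcal A$ is balanced if there are reals $\lambda_1,\dots,\lambda_r\ge0$ with $\sum_p\lambda_p\chi_{S_p}=\chi_N$ ($\chi_S$ the characteristic function of $S$ on $N$), and $v$ is balanced if $\sum_p\lambda_p v(S_p)\le v(N)$ for every balanced collection in $\mathcal A$ and every such choice of weights. The game $v'$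 is bounded-balanced if there exists a coalition function $v\colon\mathrm{field}(\mathcal A')\to\mathbb R$ with $v(\emptyset)=0$ that is bounded below and balanced and satisfies $v(S)=v'(S)$ for all $S\in\mathcal A'$. *)

theory Defs
  imports Main "HOL-Library.Indicator_Function"
begin

definition field_of_sets :: "'a set \<Rightarrow> 'a set set \<Rightarrow> bool" where
  "field_of_sets N F \<longleftrightarrow> F \<subseteq> Pow N \<and> {} \<in> F \<and> (\<forall>S\<in>F. N - S \<in> F)
     \<and> (\<forall>S\<in>F. \<forall>T\<in>F. S \<union> T \<in> F)"

definition gen_field :: "'a set \<Rightarrow> 'a set set \<Rightarrow> 'a set set" where
  "gen_field N A = \<Inter>{F. field_of_sets N F \<and> A \<subseteq> F}"

definition ba :: "'a set set \<Rightarrow> ('a set \<Rightarrow> real) set" where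
  "ba F = {\<mu>. (\<exists>B. \<forall>S\<in>F. \<bar>\<mu> S\<bar> \<le> B) \<and>
     (\<forall>S\<in>F. \<forall>T\<in>F. S \<inter> T = {} \<longrightarrow> \<mu> (S \<union> T) = \<mu> S + \<mu> T)}"

definition ba_core :: "'a set \<Rightarrow> 'a set set \<Rightarrow> ('a set \<Rightarrow> real) \<Rightarrow> ('a set \<Rightarrow> real) set" where
  "ba_core N A v' = {\<mu>. \<mu> \<in> ba (gen_field N A) \<and> \<mu> N = v' N \<and>
     (\<forall>S\<in>A - {N}. \<mu> S \<ge> v' S)}"

definition balanced_collection :: "'a set \<Rightarrow> 'a set set \<Rightarrow> 'a set set \<Rightarrow> ('a set \<Rightarrow> real) \<Rightarrow> bool" where
  "balanced_collection N A C lam \<longleftrightarrow> finite C \<and> C \<subseteq> A \<and> (\<forall>S\<in>C. lam S \<ge> 0) \<and>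
     (\<lambda>x. \<Sum>S\<in>C. lam S * indicator S x) = indicator N"

definition balanced_game :: "'a set \<Rightarrow> 'a set set \<Rightarrow> ('a set \<Rightarrow> real) \<Rightarrow> bool" where
  "balanced_game N A v \<longleftrightarrow> (\<forall>C lam. balanced_collection N A C lam \<longrightarrow>
     (\<Sum>S\<in>C. lam S * v S) \<le> v N)"

definition bounded_below_on :: "'a set set \<Rightarrow> ('a set \<Rightarrow> real) \<Rightarrow> bool" where
  "bounded_below_on A v \<longleftrightarrow> (\<exists>L. \<forall>S\<in>A. v S \<ge> L)"

definition bounded_balanced :: "'a set \<Rightarrow> 'a set set \<Rightarrow> ('a set \<Rightarrow> real) \<Rightarrow> bool" where
  "bounded_balanced N A v' \<longleftrightarrow> (\<exists>v. v {} = 0 \<and> bounded_below_on (gen_field N A) v \<and>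
     balanced_game N (gen_field N A) v \<and> (\<forall>S\<in>A. v S = v' S))"

end

(* A maximality argument in place of Hahn-Banach.  If mu is in the core, then v' extended by mu
   outside A' lies below the additive mu with equality at N, hence is balanced: an additive set
   function sums to mu N over every balanced collection.  Conversely, Zorn's lemma gives a
   balanced game w >= v with w N = v N that cannot be raised at any coalition S ~= N without
   losing balancedness; the pointwise supremum of a chain stays balanced because balancedness
   involves only finitely many coalitions at a time.  For such w the two collections that block
   raising S and raising N - S merge into one balanced collection, which forces
   w S + w (N - S) = w N.  Balancedness of {S, T, N - (S u T)} and of {S u T, N - S, N - T}
   then makes w additive, and the lower bound of v bounds w on both sides, so w is in the core. *)

theory Submission
  imports Defs "HOL-Analysis.Measure_Space"
begin

lemma algebra_gen_field:
  assumes "A \<subseteq> Pow N"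
  shows "algebra N (gen_field N A)"
proof -
  have "field_of_sets N (Pow N)"
    by (auto simp: field_of_sets_def)
  with assms show ?thesis
    unfolding gen_field_def algebra_iff_Un by (auto simp: field_of_sets_def)
qed

lemma gen_field_superset: "A \<subseteq> gen_field N A"
  unfolding gen_field_def by auto

lemma ba_iff_bounded_additive:
  "\<mu> \<in> ba F \<longleftrightarrow> (\<exists>B. \<forall>S\<in>F. \<bar>\<mu> S\<bar> \<le> B) \<and> additive F \<mu>"
  by (simp add: ba_def additive_def)

context ring_of_sets
begin

lemma additive_empty:
  fixes \<mu> :: "'a set \<Rightarrow> real"
  assumes "additive M \<mu>"
  shows "\<mu> {} = 0"
  using additiveD[OF assms, of "{}" "{}"] by simp

lemma additive_split:
  fixes \<mu> :: "'a set \<Rightarrow> real"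
  assumes "additive M \<mu>" and "X \<in> M" and "Y \<in> M"
  shows "\<mu> X = \<mu> (X \<inter> Y) + \<mu> (X - Y)"
proof -
  have "X \<inter> Y \<in> M" and "X - Y \<in> M"
    using assms by auto
  then show ?thesis
    using additiveD[OF assms(1), of "X \<inter> Y" "X - Y"] by (auto simp: Int_Diff_Un)
qed

text \<open>Stating this for traces on an arbitrary \<open>Q\<close>, not just for \<open>Q = \<Omega>\<close>, is what lets the
  induction go through: the step splits \<open>Q\<close> along the newly added set.\<close>
lemma additive_weighted_sum:
  fixes \<mu> :: "'a set \<Rightarrow> real" and c :: "'i \<Rightarrow> real"
  assumes add: "additive M \<mu>" and "finite I" and "f ` I \<subseteq> M" and "Q \<in> M"
    and "\<forall>x\<in>Q. (\<Sum>i\<in>I. c i * indicator (f i) x) = a"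
  shows "(\<Sum>i\<in>I. c i * \<mu> (f i \<inter> Q)) = a * \<mu> Q"
  using assms(2-)
proof (induction I arbitrary: a Q rule: finite_induct)
  case empty
  then show ?case
    using additive_empty[OF add] by (cases "Q = {}") auto
next
  case (insert j I)
  let ?R = "f j"
  have R: "?R \<in> M" and fI: "f ` I \<subseteq> M"
    using insert.prems by auto
  have in_R: "(\<Sum>i\<in>I. c i * \<mu> (f i \<inter> (Q \<inter> ?R))) = (a - c j) * \<mu> (Q \<inter> ?R)"
    using insert.prems insert.hyps R by (intro insert.IH) (auto simp: algebra_simps)
  have off_R: "(\<Sum>i\<in>I. c i * \<mu> (f i \<inter> (Q - ?R))) = a * \<mu> (Q - ?R)"
    using insert.prems insert.hyps R by (intro insert.IH) auto
  have split: "\<mu> (f i \<inter> Q) = \<mu> (f i \<inter> (Q \<inter> ?R)) + \<mu> (f i \<inter> (Q - ?R))" if "i \<in> I" for i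
  proof -
    have "f i \<inter> Q \<in> M"
      using fI that insert.prems by auto
    then have "\<mu> (f i \<inter> Q) = \<mu> (f i \<inter> Q \<inter> ?R) + \<mu> (f i \<inter> Q - ?R)"
      using additive_split[OF add _ R] by simp
    moreover have "f i \<inter> Q \<inter> ?R = f i \<inter> (Q \<inter> ?R)" and "f i \<inter> Q - ?R = f i \<inter> (Q - ?R)"
      by auto
    ultimately show ?thesis
      by simp
  qed
  have "(\<Sum>i\<in>insert j I. c i * \<mu> (f i \<inter> Q))
      = c j * \<mu> (?R \<inter> Q) + (\<Sum>i\<in>I. c i * \<mu> (f i \<inter> (Q \<inter> ?R)))
        + (\<Sum>i\<in>I. c i * \<mu> (f i \<inter> (Q - ?R)))"
    using insert.hyps by (simp add: split distrib_left sum.distrib)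
  also have "\<dots> = c j * \<mu> (Q \<inter> ?R) + (a - c j) * \<mu> (Q \<inter> ?R) + a * \<mu> (Q - ?R)"
    by (simp add: in_R off_R Int_commute)
  also have "\<dots> = a * \<mu> Q"
    using additive_split[OF add, of Q ?R] insert.prems R by (simp add: algebra_simps)
  finally show ?case .
qed

end

lemma (in algebra) additive_sum_balanced_collection:
  fixes \<mu> :: "'a set \<Rightarrow> real"
  assumes add: "additive M \<mu>" and bc: "balanced_collection \<Omega> M C lam"
  shows "(\<Sum>S\<in>C. lam S * \<mu> S) = \<mu> \<Omega>"
proof -
  have C: "finite C" "C \<subseteq> M" and cover: "\<forall>x. (\<Sum>S\<in>C. lam S * indicator S x) = indicator \<Omega> x"
    using bc unfolding balanced_collection_def by (auto dest: fun_cong)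
  have "(\<Sum>S\<in>C. lam S * \<mu> (S \<inter> \<Omega>)) = 1 * \<mu> \<Omega>"
    using C cover by (intro additive_weighted_sum[OF add]) auto
  moreover have "S \<inter> \<Omega> = S" if "S \<in> C" for S
    using that C sets_into_space by auto
  ultimately show ?thesis
    by simp
qed

lemma (in algebra) balanced_game_if_below_additive:
  fixes \<mu> :: "'a set \<Rightarrow> real"
  assumes add: "additive M \<mu>" and below: "\<forall>S\<in>M. v S \<le> \<mu> S" and top: "v \<Omega> = \<mu> \<Omega>"
  shows "balanced_game \<Omega> M v"
  unfolding balanced_game_def
proof (intro allI impI)
  fix C lam
  assume bc: "balanced_collection \<Omega> M C lam"
  then have "C \<subseteq> M" and "\<forall>S\<in>C. 0 \<le> lam S"
    unfolding balanced_collection_def by auto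
  then have "(\<Sum>S\<in>C. lam S * v S) \<le> (\<Sum>S\<in>C. lam S * \<mu> S)"
    using below by (intro sum_mono mult_left_mono) auto
  also have "\<dots> = v \<Omega>"
    using additive_sum_balanced_collection[OF add bc] top by simp
  finally show "(\<Sum>S\<in>C. lam S * v S) \<le> v \<Omega>" .
qed

lemma balanced_game_family_le:
  fixes w :: "'a set \<Rightarrow> real" and c :: "'i \<Rightarrow> real"
  assumes bg: "balanced_game N F w" and I: "finite I" "f ` I \<subseteq> F" "\<forall>i\<in>I. 0 \<le> c i"
    and K: "K > 0" and cover: "\<forall>x. (\<Sum>i\<in>I. c i * indicator (f i) x) = K * indicator N x"
  shows "(\<Sum>i\<in>I. c i * w (f i)) \<le> K * w N"
proof -
  define lam where "lam T = (\<Sum>i\<in>{i\<in>I. f i = T}. c i) / K" for T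
  have regroup: "(\<Sum>T\<in>f ` I. lam T * g T) = (\<Sum>i\<in>I. c i * g (f i)) / K"
    for g :: "'a set \<Rightarrow> real"
  proof -
    have "(\<Sum>i\<in>I. c i * g (f i)) = (\<Sum>T\<in>f ` I. \<Sum>i\<in>{i\<in>I. f i = T}. c i * g (f i))"
      by (rule sum.image_gen[OF I(1)])
    also have "\<dots> = (\<Sum>T\<in>f ` I. (\<Sum>i\<in>{i\<in>I. f i = T}. c i) * g T)"
      by (auto simp: sum_distrib_right intro!: sum.cong)
    finally show ?thesis
      by (simp add: lam_def sum_divide_distrib[symmetric])
  qed
  have "balanced_collection N F (f ` I) lam"
    unfolding balanced_collection_def
  proof (intro conjI)
    show "\<forall>T\<in>f ` I. 0 \<le> lam T"
      using I(3) K by (auto simp: lam_def intro!: sum_nonneg divide_nonneg_pos)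
    show "(\<lambda>x. \<Sum>T\<in>f ` I. lam T * indicator T x) = indicator N"
      using regroup cover K by auto
  qed (use I in auto)
  then have "(\<Sum>T\<in>f ` I. lam T * w T) \<le> w N"
    using bg unfolding balanced_game_def by blast
  then show ?thesis
    using regroup[of w] K by (simp add: divide_le_eq mult.commute)
qed

lemma balanced_game_list_le:
  fixes w :: "'a set \<Rightarrow> real"
  assumes bg: "balanced_game N F w" and "set Ss \<subseteq> F" and "K > 0"
    and cover: "\<forall>x. (\<Sum>S\<leftarrow>Ss. indicator S x) = K * indicator N x"
  shows "(\<Sum>S\<leftarrow>Ss. w S) \<le> K * w N"
proof -
  have "(!) Ss ` {..<length Ss} \<subseteq> F"
    using assms(2) by (auto intro!: subsetD[OF assms(2)] nth_mem)
  then show ?thesis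
    using balanced_game_family_le[OF bg, of "{..<length Ss}" "(!) Ss" "\<lambda>_. 1" K] assms
    by (simp add: sum_list_sum_nth atLeast0LessThan)
qed

lemma (in algebra) balanced_game_complement_le:
  fixes w :: "'a set \<Rightarrow> real"
  assumes "balanced_game \<Omega> M w" and "S \<in> M"
  shows "w S + w (\<Omega> - S) \<le> w \<Omega>"
  using balanced_game_list_le[OF assms(1), of "[S, \<Omega> - S]" 1] assms(2) sets_into_space
  by (fastforce simp: indicator_def)

lemma (in algebra) balanced_game_le_of_lower_bound:
  fixes w :: "'a set \<Rightarrow> real"
  assumes "balanced_game \<Omega> M w" and "\<forall>S\<in>M. L \<le> w S" and "S \<in> M"
  shows "w S \<le> w \<Omega> - L"
proof -
  have "L \<le> w (\<Omega> - S)"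
    using assms(2,3) by blast
  then show ?thesis
    using balanced_game_complement_le[OF assms(1,3)] by linarith
qed

lemma balanced_collection_weight_le_1:
  assumes "balanced_collection N F C lam" and "T \<in> C" and "T \<noteq> {}"
  shows "lam T \<le> 1"
proof -
  obtain x where "x \<in> T"
    using assms(3) by auto
  have "finite C" and nonneg: "\<forall>S\<in>C. 0 \<le> lam S"
    and cover: "(\<Sum>S\<in>C. lam S * indicator S x) = indicator N x"
    using assms(1) unfolding balanced_collection_def by (auto dest: fun_cong)
  have "lam T = lam T * indicator T x"
    using \<open>x \<in> T\<close> by simp
  also have "\<dots> \<le> (\<Sum>S\<in>C. lam S * indicator S x)"
    using \<open>finite C\<close> nonneg assms(2) by (intro member_le_sum) auto
  also have "\<dots> \<le> 1"
    using cover by (simp add: indicator_def)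
  finally show ?thesis .
qed

definition maximal_balanced_game :: "'a set \<Rightarrow> 'a set set \<Rightarrow> ('a set \<Rightarrow> real) \<Rightarrow> bool" where
  "maximal_balanced_game N F w \<longleftrightarrow> balanced_game N F w \<and>
     (\<forall>S\<in>F - {N}. \<forall>\<epsilon>>0. \<not> balanced_game N F (w(S := w S + \<epsilon>)))"

lemma balanced_game_raise_violation:
  fixes w :: "'a set \<Rightarrow> real"
  assumes bg: "balanced_game N F w" and "S \<noteq> N"
    and violated: "\<not> balanced_game N F (w(S := w S + \<epsilon>))"
  obtains C lam where "balanced_collection N F C lam" and "S \<in> C" and "lam S > 0"
    and "w N < (\<Sum>T\<in>C. lam T * w T) + lam S * \<epsilon>"
proof -
  obtain C lam where bc: "balanced_collection N F C lam"
    and gt: "w N < (\<Sum>T\<in>C. lam T * (w(S := w S + \<epsilon>)) T)"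
    using violated \<open>S \<noteq> N\<close> unfolding balanced_game_def by (auto simp: not_le)
  have "finite C" and nonneg: "\<forall>T\<in>C. lam T \<ge> 0"
    using bc unfolding balanced_collection_def by auto
  have le: "(\<Sum>T\<in>C. lam T * w T) \<le> w N"
    using bg bc unfolding balanced_game_def by blast
  have "(\<Sum>T\<in>C. lam T * (w(S := w S + \<epsilon>)) T)
      = (\<Sum>T\<in>C. lam T * w T) + (\<Sum>T\<in>C. if T = S then lam S * \<epsilon> else 0)"
    unfolding sum.distrib[symmetric] by (rule sum.cong) (auto simp: algebra_simps)
  also have "\<dots> = (\<Sum>T\<in>C. lam T * w T) + (if S \<in> C then lam S * \<epsilon> else 0)"
    using \<open>finite C\<close> by simp
  finally have "(\<Sum>T\<in>C. lam T * (w(S := w S + \<epsilon>)) T)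
      = (\<Sum>T\<in>C. lam T * w T) + (if S \<in> C then lam S * \<epsilon> else 0)" .
  with gt le have "S \<in> C" and "lam S \<noteq> 0" and "w N < (\<Sum>T\<in>C. lam T * w T) + lam S * \<epsilon>"
    by (auto split: if_splits)
  with bc nonneg show thesis
    using that by force
qed

text \<open>Scaled by \<open>m\<close> and \<open>l\<close> and with \<open>S\<close> and \<open>\<Omega> - S\<close> removed, the two collections cover \<open>\<Omega>\<close>
  exactly \<open>m + l - l * m\<close> times: the removed \<open>l * m\<close> copies of \<open>S\<close> and of \<open>\<Omega> - S\<close> form
  \<open>l * m\<close> copies of \<open>\<Omega>\<close>.\<close>
lemma (in algebra) balanced_game_merge_complementary:
  fixes w :: "'a set \<Rightarrow> real"
  assumes bg: "balanced_game \<Omega> M w"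
    and bc: "balanced_collection \<Omega> M C lam" and "S \<in> C" and l: "lam S = l" "0 < l"
    and bd: "balanced_collection \<Omega> M D mu" and "\<Omega> - S \<in> D" and m: "mu (\<Omega> - S) = m" "0 < m" "m \<le> 1"
  shows "m * ((\<Sum>T\<in>C. lam T * w T) - l * w S) + l * ((\<Sum>T\<in>D. mu T * w T) - m * w (\<Omega> - S))
    \<le> (m + l - l * m) * w \<Omega>"
proof -
  have C: "finite C" "C \<subseteq> M" "\<forall>T\<in>C. 0 \<le> lam T"
    and cover_C: "\<forall>x. (\<Sum>T\<in>C. lam T * indicator T x) = indicator \<Omega> x"
    using bc unfolding balanced_collection_def by (auto dest: fun_cong)
  have D: "finite D" "D \<subseteq> M" "\<forall>T\<in>D. 0 \<le> mu T"
    and cover_D: "\<forall>x. (\<Sum>T\<in>D. mu T * indicator T x) = indicator \<Omega> x"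
    using bd unfolding balanced_collection_def by (auto dest: fun_cong)
  define I where "I = (C - {S}) <+> (D - {\<Omega> - S})"
  define c where "c = case_sum (\<lambda>T. m * lam T) (\<lambda>T. l * mu T)"
  have merged: "(\<Sum>i\<in>I. c i * g (case_sum id id i))
      = m * ((\<Sum>T\<in>C. lam T * g T) - l * g S) + l * ((\<Sum>T\<in>D. mu T * g T) - m * g (\<Omega> - S))"
    for g :: "'a set \<Rightarrow> real"
    using C(1) D(1) \<open>S \<in> C\<close> \<open>\<Omega> - S \<in> D\<close> l(1) m(1)
    by (simp add: I_def c_def sum.Plus sum_diff1 sum_distrib_left right_diff_distrib mult.assoc)
  have "S \<subseteq> \<Omega>"
    using \<open>S \<in> C\<close> C(2) sets_into_space by blast
  then have "(\<Sum>i\<in>I. c i * indicator (case_sum id id i) x) = (m + l - l * m) * indicator \<Omega> x" for x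
  proof -
    have "(\<Sum>i\<in>I. c i * indicator (case_sum id id i) x)
        = m * (indicator \<Omega> x - l * indicator S x) + l * (indicator \<Omega> x - m * indicator (\<Omega> - S) x)"
      using merged[of "\<lambda>T. indicator T x"] cover_C cover_D by simp
    also have "\<dots> = (m + l - l * m) * indicator \<Omega> x"
      using \<open>S \<subseteq> \<Omega>\<close> by (auto simp: indicator_def algebra_simps)
    finally show ?thesis .
  qed
  moreover have "m + l - l * m > 0"
    using l m by (smt (verit) mult_left_le)
  moreover have "case_sum id id ` I \<subseteq> M" and "\<forall>i\<in>I. 0 \<le> c i"
    using C D l m by (auto simp: I_def c_def)
  ultimately have "(\<Sum>i\<in>I. c i * w (case_sum id id i)) \<le> (m + l - l * m) * w \<Omega>"
    using C(1) D(1) by (intro balanced_game_family_le[OF bg]) (auto simp: I_def)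
  then show ?thesis
    by (simp only: merged)
qed

lemma (in algebra) maximal_balanced_game_complement_ge:
  fixes w :: "'a set \<Rightarrow> real"
  assumes max: "maximal_balanced_game \<Omega> M w" and S: "S \<in> M" "S \<noteq> {}" "S \<noteq> \<Omega>"
  shows "w \<Omega> \<le> w S + w (\<Omega> - S)"
proof (rule ccontr)
  assume gap: "\<not> ?thesis"
  define \<epsilon> where "\<epsilon> = (w \<Omega> - w S - w (\<Omega> - S)) / 2"
  have "\<epsilon> > 0"
    using gap by (simp add: \<epsilon>_def)
  with max have bg: "balanced_game \<Omega> M w"
    and raise: "\<And>X. X \<in> M \<Longrightarrow> X \<noteq> \<Omega> \<Longrightarrow> \<not> balanced_game \<Omega> M (w(X := w X + \<epsilon>))"
    unfolding maximal_balanced_game_def by blast+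
  have "S \<subseteq> \<Omega>"
    using S(1) sets_into_space by blast
  with S have S': "\<Omega> - S \<in> M" "\<Omega> - S \<noteq> \<Omega>" "\<Omega> - S \<noteq> {}"
    by auto
  obtain C lam where bc: "balanced_collection \<Omega> M C lam" "S \<in> C" "lam S > 0"
      "w \<Omega> < (\<Sum>T\<in>C. lam T * w T) + lam S * \<epsilon>"
    by (rule balanced_game_raise_violation[OF bg S(3) raise[OF S(1,3)]])
  obtain D mu where bd: "balanced_collection \<Omega> M D mu" "\<Omega> - S \<in> D" "mu (\<Omega> - S) > 0"
      "w \<Omega> < (\<Sum>T\<in>D. mu T * w T) + mu (\<Omega> - S) * \<epsilon>"
    by (rule balanced_game_raise_violation[OF bg S'(2) raise[OF S'(1,2)]])
  define l m where "l = lam S" and "m = mu (\<Omega> - S)"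
  have "m \<le> 1"
    using balanced_collection_weight_le_1[OF bd(1,2) S'(3)] by (simp add: m_def)
  then have merged: "m * ((\<Sum>T\<in>C. lam T * w T) - l * w S)
      + l * ((\<Sum>T\<in>D. mu T * w T) - m * w (\<Omega> - S)) \<le> (m + l - l * m) * w \<Omega>"
    using balanced_game_merge_complementary[OF bg bc(1,2) _ _ bd(1,2)] bc(3) bd(3)
    by (simp add: l_def m_def)
  have "m * w \<Omega> < m * ((\<Sum>T\<in>C. lam T * w T) + l * \<epsilon>)"
    using bc(4) bd(3) by (simp add: l_def m_def)
  moreover have "l * w \<Omega> < l * ((\<Sum>T\<in>D. mu T * w T) + m * \<epsilon>)"
    using bd(4) bc(3) by (simp add: l_def m_def)
  moreover have "l * m * w \<Omega> = l * m * w S + l * m * w (\<Omega> - S) + 2 * (l * m * \<epsilon>)"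
  proof -
    have "w \<Omega> = w S + w (\<Omega> - S) + 2 * \<epsilon>"
      by (simp add: \<epsilon>_def field_simps)
    then show ?thesis
      by (simp add: algebra_simps)
  qed
  ultimately show False
    using merged by (simp add: algebra_simps)
qed

lemma (in algebra) maximal_balanced_game_complement:
  fixes w :: "'a set \<Rightarrow> real"
  assumes max: "maximal_balanced_game \<Omega> M w" and "w {} = 0" and S: "S \<in> M"
  shows "w S + w (\<Omega> - S) = w \<Omega>"
proof (cases "S = {} \<or> S = \<Omega>")
  case True
  then show ?thesis
    using \<open>w {} = 0\<close> by auto
next
  case False
  have "balanced_game \<Omega> M w"
    using max unfolding maximal_balanced_game_def by blast
  then show ?thesis
    using balanced_game_complement_le[OF _ S] maximal_balanced_game_complement_ge[OF max S] False
    by (intro antisym) auto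
qed

lemma (in algebra) additive_if_balanced_complement:
  fixes w :: "'a set \<Rightarrow> real"
  assumes bg: "balanced_game \<Omega> M w" and complement: "\<forall>S\<in>M. w S + w (\<Omega> - S) = w \<Omega>"
  shows "additive M w"
  unfolding additive_def
proof (intro ballI impI)
  fix S T
  assume S: "S \<in> M" and T: "T \<in> M" and "S \<inter> T = {}"
  then have "S \<union> T \<in> M" and "S \<subseteq> \<Omega>" and "T \<subseteq> \<Omega>"
    using sets_into_space by auto
  have "\<forall>x. (\<Sum>R\<leftarrow>[S, T, \<Omega> - (S \<union> T)]. indicator R x) = 1 * (indicator \<Omega> x :: real)"
    using \<open>S \<inter> T = {}\<close> \<open>S \<subseteq> \<Omega>\<close> \<open>T \<subseteq> \<Omega>\<close> by (auto simp: indicator_def)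
  then have "w S + w T + w (\<Omega> - (S \<union> T)) \<le> w \<Omega>"
    using balanced_game_list_le[OF bg, of "[S, T, \<Omega> - (S \<union> T)]" 1] S T compl_sets[OF S] compl_sets[OF T]
      \<open>S \<union> T \<in> M\<close> compl_sets[OF \<open>S \<union> T \<in> M\<close>]
    by (simp add: add.assoc)
  moreover have "\<forall>x. (\<Sum>R\<leftarrow>[S \<union> T, \<Omega> - S, \<Omega> - T]. indicator R x) = 2 * (indicator \<Omega> x :: real)"
    using \<open>S \<inter> T = {}\<close> \<open>S \<subseteq> \<Omega>\<close> \<open>T \<subseteq> \<Omega>\<close> by (auto simp: indicator_def)
  then have "w (S \<union> T) + w (\<Omega> - S) + w (\<Omega> - T) \<le> 2 * w \<Omega>"
    using balanced_game_list_le[OF bg, of "[S \<union> T, \<Omega> - S, \<Omega> - T]" 2] S T compl_sets[OF S] compl_sets[OF T]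
      \<open>S \<union> T \<in> M\<close> compl_sets[OF \<open>S \<union> T \<in> M\<close>]
    by (simp add: add.assoc)
  moreover have "w (S \<union> T) + w (\<Omega> - (S \<union> T)) = w \<Omega>"
    using complement \<open>S \<union> T \<in> M\<close> by blast
  moreover have "w S + w (\<Omega> - S) = w \<Omega>" and "w T + w (\<Omega> - T) = w \<Omega>"
    using complement S T by auto
  ultimately show "w (S \<union> T) = w S + w T"
    by linarith
qed

lemma chain_SUP_approx:
  fixes K :: "('b \<Rightarrow> real) set"
  assumes "K \<noteq> {}" and chain: "\<forall>a\<in>K. \<forall>b\<in>K. a \<le> b \<or> b \<le> a"
    and "finite C" and "\<forall>T\<in>C. bdd_above ((\<lambda>w. w T) ` K)" and "\<delta> > 0"
  shows "\<exists>W\<in>K. \<forall>T\<in>C. (SUP w\<in>K. w T) - \<delta> < W T"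
  using assms(3,4)
proof (induction C rule: finite_induct)
  case empty
  then show ?case
    using \<open>K \<noteq> {}\<close> by auto
next
  case (insert T C)
  then obtain W where W: "W \<in> K" "\<forall>T'\<in>C. (SUP w\<in>K. w T') - \<delta> < W T'"
    by auto
  have "bdd_above ((\<lambda>w. w T) ` K)"
    using insert.prems by simp
  moreover have "(SUP w\<in>K. w T) - \<delta> < (SUP w\<in>K. w T)"
    using \<open>\<delta> > 0\<close> by simp
  ultimately obtain a where a: "a \<in> K" "(SUP w\<in>K. w T) - \<delta> < a T"
    using less_cSUP_iff[OF \<open>K \<noteq> {}\<close>] by meson
  from chain W(1) a(1) obtain V where "V \<in> K" and "W \<le> V" and "a \<le> V"
    by (meson order_refl)
  have "(SUP w\<in>K. w T') - \<delta> < V T'" if "T' \<in> insert T C" for T'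
  proof (cases "T' = T")
    case True
    then have "(SUP w\<in>K. w T') - \<delta> < a T'"
      using a(2) by simp
    also have "a T' \<le> V T'"
      using \<open>a \<le> V\<close> by (rule le_funD)
    finally show ?thesis .
  next
    case False
    then have "(SUP w\<in>K. w T') - \<delta> < W T'"
      using W(2) that by simp
    also have "W T' \<le> V T'"
      using \<open>W \<le> V\<close> by (rule le_funD)
    finally show ?thesis .
  qed
  with \<open>V \<in> K\<close> show ?case
    by blast
qed

lemma balanced_game_chain_SUP:
  fixes K :: "('a set \<Rightarrow> real) set"
  assumes "K \<noteq> {}" and chain: "\<forall>a\<in>K. \<forall>b\<in>K. a \<le> b \<or> b \<le> a"
    and balanced: "\<forall>w\<in>K. balanced_game N F w" and top: "\<forall>w\<in>K. w N = c"
    and bdd: "\<forall>S\<in>F. bdd_above ((\<lambda>w. w S) ` K)"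
  shows "balanced_game N F (\<lambda>S. SUP w\<in>K. w S)"
  unfolding balanced_game_def
proof (intro allI impI)
  fix C lam
  assume bc: "balanced_collection N F C lam"
  then have C: "finite C" "C \<subseteq> F" and nonneg: "\<forall>S\<in>C. 0 \<le> lam S"
    unfolding balanced_collection_def by auto
  define \<Lambda> where "\<Lambda> = (\<Sum>S\<in>C. lam S)"
  have "\<Lambda> \<ge> 0"
    using nonneg by (simp add: \<Lambda>_def sum_nonneg)
  have "(\<Sum>S\<in>C. lam S * (SUP w\<in>K. w S)) \<le> c + e" if "e > 0" for e
  proof -
    define \<delta> where "\<delta> = e / (\<Lambda> + 1)"
    have "\<delta> > 0" and "\<delta> * \<Lambda> \<le> e"
      using \<open>e > 0\<close> \<open>\<Lambda> \<ge> 0\<close> by (auto simp: \<delta>_def field_simps)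
    moreover have "\<forall>T\<in>C. bdd_above ((\<lambda>w. w T) ` K)"
      using bdd C(2) by auto
    ultimately obtain W where W: "W \<in> K" "\<forall>T\<in>C. (SUP w\<in>K. w T) - \<delta> < W T"
      using chain_SUP_approx[OF \<open>K \<noteq> {}\<close> chain C(1)] by blast
    have "(\<Sum>S\<in>C. lam S * (SUP w\<in>K. w S)) \<le> (\<Sum>S\<in>C. lam S * (W S + \<delta>))"
      using W(2) nonneg by (intro sum_mono mult_left_mono) (auto simp: less_imp_le)
    also have "\<dots> = (\<Sum>S\<in>C. lam S * W S) + \<delta> * \<Lambda>"
      by (simp add: \<Lambda>_def distrib_left sum.distrib sum_distrib_left mult.commute)
    also have "\<dots> \<le> c + e"
    proof -
      have "(\<Sum>S\<in>C. lam S * W S) \<le> W N"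
        using balanced W(1) bc unfolding balanced_game_def by blast
      then show ?thesis
        using top W(1) \<open>\<delta> * \<Lambda> \<le> e\<close> by simp
    qed
    finally show ?thesis .
  qed
  then have "(\<Sum>S\<in>C. lam S * (SUP w\<in>K. w S)) \<le> c"
    by (rule field_le_epsilon)
  moreover have "(\<lambda>w. w N) ` K = {c}"
    using top \<open>K \<noteq> {}\<close> by auto
  ultimately show "(\<Sum>S\<in>C. lam S * (SUP w\<in>K. w S)) \<le> (SUP w\<in>K. w N)"
    by simp
qed

text \<open>Outside \<open>F\<close> these games are frozen to \<open>v\<close>, so that the pointwise order of functions is
  the right partial order on them for Zorn's lemma.\<close>
definition balanced_games_above :: "'a set \<Rightarrow> 'a set set \<Rightarrow> ('a set \<Rightarrow> real) \<Rightarrow> ('a set \<Rightarrow> real) set"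
  where "balanced_games_above N F v =
    {w. balanced_game N F w \<and> v \<le> w \<and> w N = v N \<and> (\<forall>S. S \<notin> F \<longrightarrow> w S = v S)}"

lemma (in algebra) balanced_games_above_le:
  fixes v :: "'a set \<Rightarrow> real"
  assumes lower: "\<forall>S\<in>M. L \<le> v S" and w: "w \<in> balanced_games_above \<Omega> M v" and "S \<in> M"
  shows "w S \<le> v \<Omega> - L"
proof -
  have bw: "balanced_game \<Omega> M w" and "v \<le> w" and "w \<Omega> = v \<Omega>"
    using w by (auto simp: balanced_games_above_def)
  then have "\<forall>S\<in>M. L \<le> w S"
    using lower by (meson le_funD order_trans)
  then show ?thesis
    using balanced_game_le_of_lower_bound[OF bw _ \<open>S \<in> M\<close>] \<open>w \<Omega> = v \<Omega>\<close> by simp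
qed

lemma (in algebra) balanced_games_above_chain_bound:
  fixes v :: "'a set \<Rightarrow> real"
  assumes bv: "balanced_game \<Omega> M v" and lower: "\<forall>S\<in>M. L \<le> v S"
    and "Ch \<subseteq> balanced_games_above \<Omega> M v" and chain: "\<forall>a\<in>Ch. \<forall>b\<in>Ch. a \<le> b \<or> b \<le> a"
  shows "\<exists>u\<in>balanced_games_above \<Omega> M v. \<forall>a\<in>Ch. a \<le> u"
proof -
  let ?A = "balanced_games_above \<Omega> M v"
  define K where "K = insert v Ch"
  have "K \<subseteq> ?A"
    using assms(3) bv by (auto simp: K_def balanced_games_above_def)
  have "v \<le> a" if "a \<in> ?A" for a
    using that by (simp add: balanced_games_above_def)
  with chain have chain_K: "\<forall>a\<in>K. \<forall>b\<in>K. a \<le> b \<or> b \<le> a"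
    using \<open>K \<subseteq> ?A\<close> unfolding K_def by blast
  have frozen: "(\<lambda>w. w S) ` K = {v S}" if "\<forall>w\<in>?A. w S = v S" for S
    using that \<open>K \<subseteq> ?A\<close> by (auto simp: K_def)
  have bdd: "bdd_above ((\<lambda>w. w S) ` K)" for S
  proof (cases "S \<in> M")
    case True
    then show ?thesis
      using balanced_games_above_le[OF lower] \<open>K \<subseteq> ?A\<close>
      by (auto intro!: bdd_aboveI[where M = "v \<Omega> - L"])
  next
    case False
    then show ?thesis
      using frozen[of S] by (simp add: balanced_games_above_def)
  qed
  define u where "u S = (SUP w\<in>K. w S)" for S
  have upper: "a \<le> u" if "a \<in> K" for a
    using that bdd by (auto simp: u_def intro!: le_funI cSUP_upper)
  have "balanced_game \<Omega> M u"
    unfolding u_def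
    by (rule balanced_game_chain_SUP[of K, where c = "v \<Omega>"])
      (use chain_K \<open>K \<subseteq> ?A\<close> bdd in \<open>auto simp: K_def balanced_games_above_def\<close>)
  moreover have "u \<Omega> = v \<Omega>" and "\<forall>S. S \<notin> M \<longrightarrow> u S = v S"
    using frozen by (simp_all add: u_def balanced_games_above_def)
  ultimately have "u \<in> ?A"
    using upper[of v] by (simp add: balanced_games_above_def K_def)
  then show ?thesis
    using upper by (auto simp: K_def)
qed

lemma (in algebra) maximal_balanced_game_above:
  fixes v :: "'a set \<Rightarrow> real"
  assumes bv: "balanced_game \<Omega> M v" and lower: "\<forall>S\<in>M. L \<le> v S"
  obtains w where "maximal_balanced_game \<Omega> M w" and "\<forall>S\<in>M. v S \<le> w S" and "w \<Omega> = v \<Omega>"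
proof -
  let ?A = "balanced_games_above \<Omega> M v"
  have "partial_order_on ?A (relation_of (\<le>) ?A)"
    by (rule partial_order_on_relation_ofI) auto
  moreover have "\<exists>u\<in>?A. \<forall>a\<in>Ch. a \<le> u" if Ch: "Ch \<in> Chains (relation_of (\<le>) ?A)" for Ch
    using Chains_relation_of[OF Ch] Ch
    by (intro balanced_games_above_chain_bound[OF bv lower]) (auto simp: Chains_def relation_of_def)
  ultimately obtain w where "w \<in> ?A" and max: "\<forall>a\<in>?A. w \<le> a \<longrightarrow> a = w"
    using predicate_Zorn[of ?A "(\<le>)"] by blast
  have "maximal_balanced_game \<Omega> M w"
    unfolding maximal_balanced_game_def
  proof (intro conjI ballI allI impI notI)
    show "balanced_game \<Omega> M w"
      using \<open>w \<in> ?A\<close> by (simp add: balanced_games_above_def)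
  next
    fix S and \<epsilon> :: real
    assume "S \<in> M - {\<Omega>}" and "\<epsilon> > 0" and "balanced_game \<Omega> M (w(S := w S + \<epsilon>))"
    have raised: "w \<le> w(S := w S + \<epsilon>)"
      using \<open>\<epsilon> > 0\<close> by (simp add: le_fun_def)
    moreover have "w(S := w S + \<epsilon>) \<in> ?A"
    proof -
      have "v \<le> w(S := w S + \<epsilon>)"
        using \<open>w \<in> ?A\<close> order_trans[OF _ raised] by (simp add: balanced_games_above_def)
      with \<open>S \<in> M - {\<Omega>}\<close> \<open>balanced_game \<Omega> M (w(S := w S + \<epsilon>))\<close> \<open>w \<in> ?A\<close> show ?thesis
        by (auto simp: balanced_games_above_def)
    qed
    ultimately have "w(S := w S + \<epsilon>) = w"
      using max by blast
    then have "w S + \<epsilon> = w S"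
      by (metis fun_upd_same)
    with \<open>\<epsilon> > 0\<close> show False
      by simp
  qed
  moreover have "\<forall>S\<in>M. v S \<le> w S" and "w \<Omega> = v \<Omega>"
    using \<open>w \<in> ?A\<close> by (auto simp: balanced_games_above_def le_fun_def)
  ultimately show thesis
    by (rule that)
qed

lemma (in algebra) balanced_game_dominated_by_ba:
  fixes v :: "'a set \<Rightarrow> real"
  assumes bv: "balanced_game \<Omega> M v" and "bounded_below_on M v" and "v {} = 0"
  obtains \<mu> where "\<mu> \<in> ba M" and "\<mu> \<Omega> = v \<Omega>" and "\<forall>S\<in>M. v S \<le> \<mu> S"
proof -
  obtain L where lower: "\<forall>S\<in>M. L \<le> v S"
    using assms(2) unfolding bounded_below_on_def by blast
  obtain w where max: "maximal_balanced_game \<Omega> M w" and above: "\<forall>S\<in>M. v S \<le> w S"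
    and top: "w \<Omega> = v \<Omega>"
    using maximal_balanced_game_above[OF bv lower] by blast
  have bw: "balanced_game \<Omega> M w"
    using max by (simp add: maximal_balanced_game_def)
  have "w {} \<le> 0"
    using balanced_game_complement_le[OF bw empty_sets] by simp
  moreover have "v {} \<le> w {}"
    using above by simp
  ultimately have "w {} = 0"
    using \<open>v {} = 0\<close> by simp
  then have "additive M w"
    using maximal_balanced_game_complement[OF max] by (intro additive_if_balanced_complement[OF bw]) simp
  moreover have "\<bar>w S\<bar> \<le> \<bar>v \<Omega>\<bar> + \<bar>L\<bar>" if "S \<in> M" for S
  proof -
    have "\<forall>S\<in>M. L \<le> w S"
      using lower above by (meson order_trans)
    then have "L \<le> w S" and "w S \<le> v \<Omega> - L"
      using balanced_game_le_of_lower_bound[OF bw _ that] that top by auto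
    then show ?thesis
      by linarith
  qed
  ultimately have "w \<in> ba M"
    by (auto simp: ba_iff_bounded_additive)
  then show thesis
    using top above by (rule that)
qed
lemma bounded_balanced_if_in_ba_core:
  assumes "A' \<subseteq> Pow N" and "{} \<in> A'" and "v' {} = 0" and "bounded_below_on A' v'"
    and core: "\<mu> \<in> ba_core N A' v'"
  shows "bounded_balanced N A' v'"
proof -
  let ?F = "gen_field N A'"
  interpret algebra N ?F
    using algebra_gen_field[OF assms(1)] .
  have "\<mu> \<in> ba ?F" and top: "\<mu> N = v' N" and above: "\<forall>S\<in>A' - {N}. v' S \<le> \<mu> S"
    using core by (auto simp: ba_core_def)
  then obtain B where B: "\<forall>S\<in>?F. \<bar>\<mu> S\<bar> \<le> B" and add: "additive ?F \<mu>"
    by (auto simp: ba_iff_bounded_additive)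
  obtain L where L: "\<forall>S\<in>A'. L \<le> v' S"
    using assms(4) by (auto simp: bounded_below_on_def)
  define v where "v S = (if S \<in> A' then v' S else \<mu> S)" for S
  have "\<forall>S\<in>?F. v S \<le> \<mu> S" and "v N = \<mu> N"
    using above top by (auto simp: v_def)
  then have "balanced_game N ?F v"
    by (rule balanced_game_if_below_additive[OF add])
  moreover have "bounded_below_on ?F v"
    unfolding bounded_below_on_def
  proof (intro exI ballI)
    fix S
    assume "S \<in> ?F"
    then show "min L (- B) \<le> v S"
      using L B by (force simp: v_def)
  qed
  moreover have "v {} = 0" and "\<forall>S\<in>A'. v S = v' S"
    using assms(2,3) by (simp_all add: v_def)
  ultimately show ?thesis
    unfolding bounded_balanced_def by (intro exI[of _ v]) simp
qed

lemma ba_core_nonempty_if_bounded_balanced: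
  assumes "A' \<subseteq> Pow N" and "N \<in> A'" and "bounded_balanced N A' v'"
  shows "ba_core N A' v' \<noteq> {}"
proof -
  let ?F = "gen_field N A'"
  interpret algebra N ?F
    using algebra_gen_field[OF assms(1)] .
  obtain v where "v {} = 0" and "bounded_below_on ?F v" and "balanced_game N ?F v"
    and agree: "\<forall>S\<in>A'. v S = v' S"
    using assms(3) unfolding bounded_balanced_def by blast
  then obtain \<mu> where "\<mu> \<in> ba ?F" and "\<mu> N = v N" and below: "\<forall>S\<in>?F. v S \<le> \<mu> S"
    using balanced_game_dominated_by_ba by metis
  moreover have "v' S \<le> \<mu> S" if "S \<in> A'" for S
  proof -
    have "S \<in> ?F"
      using that gen_field_superset by blast
    then show ?thesis
      using below agree that by force
  qed
  ultimately have "\<mu> \<in> ba_core N A' v'"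
    using agree assms(2) by (simp add: ba_core_def)
  then show ?thesis
    by blast
qed

theorem theorem8:
  fixes N :: "'a set" and A' :: "'a set set" and v' :: "'a set \<Rightarrow> real"
  assumes "A' \<subseteq> Pow N" and "{} \<in> A'" and "N \<in> A'"
    and "v' {} = 0"
    and "bounded_below_on A' v'"
  shows "ba_core N A' v' \<noteq> {} \<longleftrightarrow> bounded_balanced N A' v'"
  using bounded_balanced_if_in_ba_core[OF assms(1,2,4,5)]
    ba_core_nonempty_if_bounded_balanced[OF assms(1,3)]
  by blast

end
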